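(* Let $G$ be a strongly Deza graph with parameters $(n,k,b,a)$ having exactly four distinct eigenvalues $k,\theta_2,\theta_3,\theta_4$ with multiplicities $1,m_2,m_3,m_4$ (all positive), where $\theta_4=-\theta_3$ and $m_3=m_4$. Then $\theta_2=-k/m_2$ is an integer with $\theta_2\leqslant -1$, and $$\theta_{3,4}=\pm\sqrt{k\left(1+\frac{(\theta_2+1)(m_2+1)}{n-m_2-1}\right)}.$$
   Context: All graphs are finite, simple and undirected; eigenvalues of a graph are those of its adjacency matrix. A Deza graph with parameters $(n,k,b,a)$, where $b\geqslant a$, is a $k$-regular graph on $n$ vertices, which is neither complete nor edgeless, such that any two distinct vertices have exactly $b$ or exactly $a$ common neighbours. If $b>a$, the children $G_A$ and $G_B$ of $G$ are the graphs on the vertex set of $G$ in which two distinct vertices are adjacent if and only if they have exactly $a$ (for $G_A$), respectively exactly $b$ (for $G_B$), common neighbours in $G$; if $b=a$, $G_A$ is the complete graph and $G_B$ is the edgeless graph. A strongly regular graph with parameters $(n,k,\lambda,\mu)$ is a $k$-regular graph on $n$ vertices, neither complete nor edgeless, in which any two adjacent vertices have exactly $\lambda$ common neighbours and any two distinct non-adjacent vertices have exactly $\mu$ common neighbours (disconnected examples, i.e. disjoint unions of at least two cliques of equal size, are allowed). A strongly Deza graph is a Deza graph both of whose children are strongly regular graphs. *)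

theory Defs
  imports "Jordan_Normal_Form.Char_Poly"
begin

definition simple_graph :: "nat \<Rightarrow> (nat \<Rightarrow> nat \<Rightarrow> bool) \<Rightarrow> bool" where
  "simple_graph n E \<longleftrightarrow>
     (\<forall>u v. E u v \<longrightarrow> u < n \<and> v < n) \<and>
     (\<forall>u v. E u v \<longrightarrow> E v u) \<and> (\<forall>u. \<not> E u u)"

definition common_nbrs :: "nat \<Rightarrow> (nat \<Rightarrow> nat \<Rightarrow> bool) \<Rightarrow> nat \<Rightarrow> nat \<Rightarrow> nat" where
  "common_nbrs n E u v = card {w. w < n \<and> E u w \<and> E v w}"

definition regular :: "nat \<Rightarrow> (nat \<Rightarrow> nat \<Rightarrow> bool) \<Rightarrow> nat \<Rightarrow> bool" where
  "regular n E k \<longleftrightarrow> (\<forall>u<n. card {v. v < n \<and> E u v} = k)"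

definition complete_graph :: "nat \<Rightarrow> (nat \<Rightarrow> nat \<Rightarrow> bool) \<Rightarrow> bool" where
  "complete_graph n E \<longleftrightarrow> (\<forall>u<n. \<forall>v<n. u \<noteq> v \<longrightarrow> E u v)"

definition edgeless :: "(nat \<Rightarrow> nat \<Rightarrow> bool) \<Rightarrow> bool" where
  "edgeless E \<longleftrightarrow> (\<forall>u v. \<not> E u v)"

definition deza_graph :: "nat \<Rightarrow> (nat \<Rightarrow> nat \<Rightarrow> bool) \<Rightarrow> nat \<Rightarrow> nat \<Rightarrow> nat \<Rightarrow> bool" where
  "deza_graph n E k b a \<longleftrightarrow>
     simple_graph n E \<and> regular n E k \<and> b \<ge> a \<and>
     \<not> complete_graph n E \<and> \<not> edgeless E \<and>
     (\<forall>u<n. \<forall>v<n. u \<noteq> v \<longrightarrow> common_nbrs n E u v = b \<or> common_nbrs n E u v = a)"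

definition child_A :: "nat \<Rightarrow> (nat \<Rightarrow> nat \<Rightarrow> bool) \<Rightarrow> nat \<Rightarrow> nat \<Rightarrow> nat \<Rightarrow> nat \<Rightarrow> bool" where
  "child_A n E b a u v \<longleftrightarrow> u < n \<and> v < n \<and> u \<noteq> v \<and>
     (if b > a then common_nbrs n E u v = a else True)"

definition child_B :: "nat \<Rightarrow> (nat \<Rightarrow> nat \<Rightarrow> bool) \<Rightarrow> nat \<Rightarrow> nat \<Rightarrow> nat \<Rightarrow> nat \<Rightarrow> bool" where
  "child_B n E b a u v \<longleftrightarrow> u < n \<and> v < n \<and> u \<noteq> v \<and>
     (if b > a then common_nbrs n E u v = b else False)"

definition srg :: "nat \<Rightarrow> (nat \<Rightarrow> nat \<Rightarrow> bool) \<Rightarrow> nat \<Rightarrow> nat \<Rightarrow> nat \<Rightarrow> bool" where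
  "srg n E k lam mu \<longleftrightarrow>
     simple_graph n E \<and> regular n E k \<and>
     \<not> complete_graph n E \<and> \<not> edgeless E \<and>
     (\<forall>u<n. \<forall>v<n. u \<noteq> v \<longrightarrow> E u v \<longrightarrow> common_nbrs n E u v = lam) \<and>
     (\<forall>u<n. \<forall>v<n. u \<noteq> v \<longrightarrow> \<not> E u v \<longrightarrow> common_nbrs n E u v = mu)"

definition is_srg :: "nat \<Rightarrow> (nat \<Rightarrow> nat \<Rightarrow> bool) \<Rightarrow> bool" where
  "is_srg n E \<longleftrightarrow> (\<exists>k lam mu. srg n E k lam mu)"

definition strongly_deza :: "nat \<Rightarrow> (nat \<Rightarrow> nat \<Rightarrow> bool) \<Rightarrow> nat \<Rightarrow> nat \<Rightarrow> nat \<Rightarrow> bool" where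
  "strongly_deza n E k b a \<longleftrightarrow>
     deza_graph n E k b a \<and> is_srg n (child_A n E b a) \<and> is_srg n (child_B n E b a)"

definition adj_matrix :: "nat \<Rightarrow> (nat \<Rightarrow> nat \<Rightarrow> bool) \<Rightarrow> real mat" where
  "adj_matrix n E = mat n n (\<lambda>(i, j). if E i j then 1 else 0)"

definition eig_mult :: "real mat \<Rightarrow> real \<Rightarrow> nat" where
  "eig_mult A \<theta> = order \<theta> (char_poly A)"

end

theory Submission
  imports Defs "Jordan_Normal_Form.Schur_Decomposition"
begin

text \<open>Counting the eigenvalues of the adjacency matrix A with multiplicity and taking the
  traces of A and A*A gives n = 1 + m2 + 2 m3, 0 = k + m2 \<theta>2 (the eigenvalues \<theta>3 and -\<theta>3
  cancel) and n k = k^2 + m2 \<theta>2^2 + 2 m3 \<theta>3^2. Hence \<theta>2 = -k/m2 is a negative rational root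
  of the monic integer characteristic polynomial, so an integer at most -1, and substituting
  m2 \<theta>2^2 = -k \<theta>2 into the last identity determines \<theta>3^2.\<close>

definition mat_trace :: "'a :: comm_ring_1 mat \<Rightarrow> 'a" where
  "mat_trace A = sum_list (diag_mat A)"

lemma mat_trace_eq_sum: "mat_trace A = (\<Sum>i<dim_row A. A $$ (i,i))"
  unfolding mat_trace_def diag_mat_def by (simp add: sum_list_sum_nth lessThan_atLeast0)

lemma mat_trace_mult_comm:
  assumes "X \<in> carrier_mat n m" "Y \<in> carrier_mat m n"
  shows "mat_trace (X * Y) = mat_trace (Y * X)"
proof -
  have "mat_trace (X * Y) = (\<Sum>i<n. \<Sum>j<m. X $$ (i,j) * Y $$ (j,i))"
    using assms unfolding mat_trace_eq_sum
    by (auto simp: scalar_prod_def lessThan_atLeast0 intro!: sum.cong)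
  also have "\<dots> = (\<Sum>j<m. \<Sum>i<n. X $$ (i,j) * Y $$ (j,i))" by (rule sum.swap)
  also have "\<dots> = mat_trace (Y * X)"
    using assms unfolding mat_trace_eq_sum
    by (auto simp: scalar_prod_def lessThan_atLeast0 mult.commute intro!: sum.cong)
  finally show ?thesis .
qed

lemma similar_mat_wit_mat_trace:
  assumes "similar_mat_wit A B P Q"
  shows "mat_trace A = mat_trace B"
proof -
  note wit = similar_mat_witD[OF refl assms]
  have "mat_trace A = mat_trace (Q * (P * B))"
    unfolding wit(3) using wit(5-7) by (intro mat_trace_mult_comm) auto
  also have "Q * (P * B) = (Q * P) * B"
    using wit(7,6,5) by (rule assoc_mult_mat[symmetric])
  also have "\<dots> = B" using wit(2,5) by simp
  finally show ?thesis .
qed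

lemma upper_triangular_mult_diag:
  assumes "B \<in> carrier_mat n n" "C \<in> carrier_mat n n"
    and "upper_triangular B" "upper_triangular C" and "i < n"
  shows "(B * C) $$ (i,i) = B $$ (i,i) * C $$ (i,i)"
proof -
  have "(B * C) $$ (i,i) = (\<Sum>j\<in>{0..<n}. B $$ (i,j) * C $$ (j,i))"
    using assms by (simp add: scalar_prod_def)
  also have "\<dots> = (\<Sum>j\<in>{i}. B $$ (i,j) * C $$ (j,i))"
  proof (rule sum.mono_neutral_right)
    show "\<forall>j\<in>{0..<n} - {i}. B $$ (i,j) * C $$ (j,i) = 0"
    proof
      fix j assume "j \<in> {0..<n} - {i}"
      hence "j < i \<and> j < n \<or> i < j \<and> j < n" by auto
      thus "B $$ (i,j) * C $$ (j,i) = 0" using assms by (auto simp: upper_triangular_def)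
    qed
  qed (use assms in auto)
  finally show ?thesis by simp
qed

lemma mat_trace_char_poly_split:
  fixes A :: "'a :: conjugatable_ordered_field mat"
  assumes A: "A \<in> carrier_mat n n"
    and cp: "char_poly A = (\<Prod>r\<leftarrow>rs. [:- r, 1:])"
  shows "mat_trace A = sum_list rs"
    and "mat_trace (A * A) = sum_list (map (\<lambda>r. r\<^sup>2) rs)"
proof -
  obtain B P Q where "schur_decomposition A rs = (B,P,Q)"
    by (cases "schur_decomposition A rs") auto
  from schur_decomposition[OF A cp this] have sim: "similar_mat_wit A B P Q"
    and ut: "upper_triangular B" and dg: "diag_mat B = rs" by auto
  have B: "B \<in> carrier_mat n n" using sim A unfolding similar_mat_wit_def Let_def by auto
  show "mat_trace A = sum_list rs"
    using similar_mat_wit_mat_trace[OF sim] dg unfolding mat_trace_def by simp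
  have "similar_mat_wit (A ^\<^sub>m 2) (B ^\<^sub>m 2) P Q" by (rule similar_mat_wit_pow[OF sim])
  hence "mat_trace (A * A) = mat_trace (B * B)"
    using A B by (simp add: numeral_2_eq_2 similar_mat_wit_mat_trace)
  moreover have "diag_mat (B * B) = map (\<lambda>r. r\<^sup>2) (diag_mat B)"
    using upper_triangular_mult_diag[OF B B ut ut] B by (auto simp: diag_mat_def power2_eq_square)
  ultimately show "mat_trace (A * A) = sum_list (map (\<lambda>r. r\<^sup>2) rs)"
    unfolding mat_trace_def dg by simp
qed

lemma eigenvalue_real_symmetric_Im_0:
  fixes A :: "real mat"
  assumes A: "A \<in> carrier_mat n n"
    and sym: "\<And>i j. i < n \<Longrightarrow> j < n \<Longrightarrow> A $$ (i,j) = A $$ (j,i)"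
    and ev: "eigenvalue (map_mat complex_of_real A) c"
  shows "Im c = 0"
proof -
  let ?A = "map_mat complex_of_real A"
  from ev obtain v where v: "v \<in> carrier_vec n" "v \<noteq> 0\<^sub>v n" "?A *\<^sub>v v = c \<cdot>\<^sub>v v"
    unfolding eigenvalue_def eigenvector_def using A by auto
  have Av: "(?A *\<^sub>v v) $ i = (\<Sum>j<n. complex_of_real (A $$ (i,j)) * v $ j)" if "i < n" for i
    using that A v(1)
    by (auto simp: mult_mat_vec_def scalar_prod_def row_def lessThan_atLeast0 intro!: sum.cong)
  define N where "N = (\<Sum>i<n. cnj (v $ i) * v $ i)"
  have S1: "(\<Sum>i<n. cnj (v $ i) * (?A *\<^sub>v v) $ i) = c * N"
    unfolding N_def v(3) sum_distrib_left using v(1) by (auto intro!: sum.cong)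
  have "(\<Sum>i<n. cnj (v $ i) * (?A *\<^sub>v v) $ i) =
      (\<Sum>i<n. \<Sum>j<n. cnj (v $ i) * complex_of_real (A $$ (i,j)) * v $ j)"
    by (simp add: Av sum_distrib_left mult.assoc)
  also have "\<dots> = (\<Sum>j<n. \<Sum>i<n. cnj (v $ i) * complex_of_real (A $$ (i,j)) * v $ j)"
    by (rule sum.swap)
  also have "\<dots> = (\<Sum>j<n. v $ j * cnj ((?A *\<^sub>v v) $ j))"
    by (auto simp: Av sum_distrib_left sum_distrib_right sym intro!: sum.cong)
  also have "\<dots> = cnj c * N"
    unfolding N_def v(3) sum_distrib_left using v(1) by (auto intro!: sum.cong)
  finally have eq: "c * N = cnj c * N" using S1 by simp
  from v obtain i where i: "i < n" "v $ i \<noteq> 0" by (metis eq_vecI carrier_vecD index_zero_vec(1,2))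
  have Nr: "N = complex_of_real (\<Sum>i<n. (cmod (v $ i))^2)"
    unfolding N_def by (simp add: complex_mult_cnj cmod_power2 mult.commute)
  have "(\<Sum>i<n. (cmod (v $ i))^2) > 0"
    using i by (intro sum_pos2[of _ i]) auto
  hence "N \<noteq> 0" unfolding Nr by (metis of_real_eq_0_iff less_irrefl)
  with eq have "c = cnj c" by simp
  thus ?thesis by (metis complex_cnj_cancel_iff complex.expand cnj.simps(1,2) neg_equal_zero)
qed

lemma char_poly_real_symmetric_splits:
  fixes A :: "real mat"
  assumes A: "A \<in> carrier_mat n n"
    and sym: "\<And>i j. i < n \<Longrightarrow> j < n \<Longrightarrow> A $$ (i,j) = A $$ (j,i)"
  obtains rs where "char_poly A = (\<Prod>r\<leftarrow>rs. [:- r, 1:])" and "length rs = n"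
proof -
  interpret hp: map_poly_inj_comm_ring_hom complex_of_real ..
  let ?A = "map_mat complex_of_real A"
  have Ac: "?A \<in> carrier_mat n n" using A by simp
  have cp: "char_poly ?A = map_poly complex_of_real (char_poly A)"
    by (rule of_real_hom.char_poly_hom[OF A])
  obtain as where as: "char_poly ?A = (\<Prod>a\<leftarrow>as. [:- a, 1:])" "length as = n"
    using char_poly_factorized[OF Ac] by blast
  have real: "a = complex_of_real (Re a)" if "a \<in> set as" for a
  proof -
    have "poly (char_poly ?A) a = 0" unfolding as(1) using that
      by (simp add: poly_prod_list prod_list_zero_iff)
    hence "eigenvalue ?A a" using eigenvalue_root_char_poly[OF Ac] by simp
    hence "Im a = 0" using eigenvalue_real_symmetric_Im_0[OF A sym, of a] by simp
    thus ?thesis by (simp add: complex_eq_iff)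
  qed
  define rs where "rs = map Re as"
  have asr: "as = map complex_of_real rs" unfolding rs_def using real
    by (induct as) auto
  have "map_poly complex_of_real (\<Prod>r\<leftarrow>rs. [:- r, 1:]) = (\<Prod>a\<leftarrow>as. [:- a, 1:])"
    unfolding asr by (induct rs) (auto simp: hp.hom_mult simp del: mult_pCons_left)
  hence "map_poly complex_of_real (\<Prod>r\<leftarrow>rs. [:- r, 1:]) =
      map_poly complex_of_real (char_poly A)"
    using as cp by simp
  hence "char_poly A = (\<Prod>r\<leftarrow>rs. [:- r, 1:])" by (simp only: hp.eq_iff)
  moreover have "length rs = n" using as(2) unfolding rs_def by simp
  ultimately show ?thesis by (rule that)
qed

lemma order_prod_linear_factors:
  fixes rs :: "'a :: idom list"
  shows "Polynomial.order x (\<Prod>r\<leftarrow>rs. [:- r, 1:]) = count_list rs x"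
proof (induct rs)
  case Nil
  thus ?case by simp
next
  case (Cons r rs)
  have "(\<Prod>r\<leftarrow>rs. [:- r, 1:]) \<noteq> 0" by (auto simp: prod_list_zero_iff)
  hence "Polynomial.order x (\<Prod>r\<leftarrow>r # rs. [:- r, 1:]) =
      Polynomial.order x [:- r, 1:] + Polynomial.order x (\<Prod>r\<leftarrow>rs. [:- r, 1:])"
    by (simp add: order_mult del: mult_pCons_left)
  moreover have "Polynomial.order x [:- r, 1:] = (if x = r then 1 else 0)"
    using order_power_n_n[of x 1] by (auto simp: order_0I)
  ultimately show ?case using Cons by simp
qed

lemma sum_list_map_eq_sum_count_of_nat:
  fixes f :: "'a \<Rightarrow> 'b :: semiring_1"
  assumes "set xs \<subseteq> X" "finite X"
  shows "sum_list (map f xs) = (\<Sum>x\<in>X. of_nat (count_list xs x) * f x)"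
  using assms(1)
proof (induct xs)
  case Nil
  thus ?case by simp
next
  case (Cons a xs)
  hence "a \<in> X" by simp
  have "(\<Sum>x\<in>X. of_nat (count_list (a # xs) x) * f x) =
      (\<Sum>x\<in>X. (if a = x then f x else 0) + of_nat (count_list xs x) * f x)"
    by (intro sum.cong) (auto simp: distrib_right)
  also have "\<dots> = f a + (\<Sum>x\<in>X. of_nat (count_list xs x) * f x)"
    using \<open>a \<in> X\<close> assms(2) by (simp add: sum.distrib)
  finally show ?case using Cons by simp
qed

lemma sum_list_roots_eq_sum_eig_mult:
  fixes A :: "real mat"
  assumes A: "A \<in> carrier_mat n n"
    and cp: "char_poly A = (\<Prod>r\<leftarrow>rs. [:- r, 1:])"
    and S: "finite S" "{\<theta>. eigenvalue A \<theta>} \<subseteq> S"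
  shows "sum_list (map f rs) = (\<Sum>\<theta>\<in>S. real (eig_mult A \<theta>) * f \<theta>)"
proof -
  have "set rs \<subseteq> S"
  proof
    fix r assume "r \<in> set rs"
    hence "poly (char_poly A) r = 0" unfolding cp by (simp add: poly_prod_list prod_list_zero_iff)
    thus "r \<in> S" using eigenvalue_root_char_poly[OF A] S(2) by auto
  qed
  from sum_list_map_eq_sum_count_of_nat[OF this S(1)] show ?thesis
    unfolding eig_mult_def cp order_prod_linear_factors .
qed

lemma poly_of_int_fraction_cleared:
  fixes P :: "int poly" and p q :: int
  assumes "q \<noteq> 0"
  shows "(of_int q :: 'a :: field_char_0) ^ degree P * poly (map_poly of_int P) (of_int p / of_int q)
    = of_int (\<Sum>i\<le>degree P. coeff P i * p ^ i * q ^ (degree P - i))"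
proof -
  let ?d = "degree P" and ?x = "(of_int p / of_int q :: 'a)"
  have "of_int q ^ ?d * (of_int (coeff P i) * ?x ^ i) = of_int (coeff P i * p ^ i * q ^ (?d - i))"
    if "i \<le> ?d" for i
  proof -
    have "of_int q ^ ?d = (of_int q :: 'a) ^ i * of_int q ^ (?d - i)"
      using that by (simp add: power_add[symmetric])
    moreover have "(of_int q :: 'a) ^ i * ?x ^ i = of_int p ^ i"
      using assms by (simp add: power_mult_distrib[symmetric])
    ultimately show ?thesis by (simp add: algebra_simps)
  qed
  thus ?thesis
    by (simp add: poly_altdef sum_distrib_left of_int_sum del: of_int_mult of_int_power)
qed

lemma monic_int_poly_rational_root_Ints:
  fixes P :: "int poly" and x :: "'a :: field_char_0"
  assumes monic: "lead_coeff P = 1" and root: "poly (map_poly of_int P) x = 0" and "x \<in> \<rat>"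
  shows "x \<in> \<int>"
proof -
  obtain p q where q: "q > 0" and cop: "coprime p q" and x: "x = of_int p / of_int q"
    using Rats_cases'[OF \<open>x \<in> \<rat>\<close>] by metis
  let ?d = "degree P"
  let ?t = "\<lambda>i. coeff P i * p ^ i * q ^ (?d - i)"
  have "(of_int (\<Sum>i\<le>?d. ?t i) :: 'a) = 0"
    using poly_of_int_fraction_cleared[of q P p, where 'a = 'a] q root x by (simp del: of_int_sum)
  hence "(\<Sum>i\<le>?d. ?t i) = 0" by (simp only: of_int_eq_0_iff)
  hence "p ^ ?d = - (\<Sum>i<?d. ?t i)"
    using monic by (simp add: lessThan_Suc_atMost[symmetric] eq_neg_iff_add_eq_0 add.commute)
  moreover have "q dvd (\<Sum>i<?d. ?t i)" by (intro dvd_sum) simp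
  ultimately have "q dvd p ^ ?d" by simp
  with cop have "is_unit q" by (meson coprime_common_divisor coprime_power_left_iff dvd_refl)
  with q x show ?thesis by simp
qed

lemma adj_matrix_carrier: "adj_matrix n E \<in> carrier_mat n n"
  unfolding adj_matrix_def by simp

lemma adj_matrix_symmetric:
  assumes "simple_graph n E" "i < n" "j < n"
  shows "adj_matrix n E $$ (i,j) = adj_matrix n E $$ (j,i)"
  using assms unfolding adj_matrix_def simple_graph_def by auto

lemma mat_trace_adj_matrix:
  assumes "simple_graph n E"
  shows "mat_trace (adj_matrix n E) = 0"
  using assms unfolding mat_trace_eq_sum adj_matrix_def simple_graph_def by simp

lemma mat_trace_adj_matrix_square:
  assumes sg: "simple_graph n E" and reg: "regular n E k"
  shows "mat_trace (adj_matrix n E * adj_matrix n E) = real n * real k"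
proof -
  let ?A = "adj_matrix n E"
  have "(?A * ?A) $$ (i,i) = real k" if i: "i < n" for i
  proof -
    have "(?A * ?A) $$ (i,i) = (\<Sum>j\<in>{0..<n}. if E i j then 1 else 0)"
      using i sg unfolding adj_matrix_def simple_graph_def
      by (auto simp: scalar_prod_def intro!: sum.cong)
    also have "\<dots> = real (card {j. j < n \<and> E i j})"
      by (simp add: sum.If_cases Int_def atLeast0LessThan)
    finally show ?thesis using reg i unfolding regular_def by simp
  qed
  thus ?thesis unfolding mat_trace_eq_sum by (simp add: adj_matrix_def)
qed

lemma regular_degree_pos:
  assumes sg: "simple_graph n E" and reg: "regular n E k" and "\<not> edgeless E"
  shows "0 < k"
proof -
  from \<open>\<not> edgeless E\<close> obtain u v where uv: "E u v" unfolding edgeless_def by blast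
  with sg have "u < n" "v \<in> {w. w < n \<and> E u w}" unfolding simple_graph_def by auto
  moreover have "finite {w. w < n \<and> E u w}" by simp
  ultimately show ?thesis using reg unfolding regular_def by (metis card_gt_0_iff empty_iff)
qed

lemma adj_matrix_spectral_moments:
  assumes sg: "simple_graph n E" and reg: "regular n E k"
    and S: "finite S" "{\<theta>. eigenvalue (adj_matrix n E) \<theta>} \<subseteq> S"
  shows "(\<Sum>\<theta>\<in>S. real (eig_mult (adj_matrix n E) \<theta>)) = real n"
    and "(\<Sum>\<theta>\<in>S. real (eig_mult (adj_matrix n E) \<theta>) * \<theta>) = 0"
    and "(\<Sum>\<theta>\<in>S. real (eig_mult (adj_matrix n E) \<theta>) * \<theta>\<^sup>2) = real n * real k"
proof -
  let ?A = "adj_matrix n E"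
  obtain rs where cp: "char_poly ?A = (\<Prod>r\<leftarrow>rs. [:- r, 1:])" and len: "length rs = n"
    using char_poly_real_symmetric_splits[OF adj_matrix_carrier adj_matrix_symmetric[OF sg]] .
  note moments = sum_list_roots_eq_sum_eig_mult[OF adj_matrix_carrier cp S]
  show "(\<Sum>\<theta>\<in>S. real (eig_mult ?A \<theta>)) = real n"
    using moments[of "\<lambda>_. 1"] len by (simp add: sum_list_triv)
  show "(\<Sum>\<theta>\<in>S. real (eig_mult ?A \<theta>) * \<theta>) = 0"
    using moments[of "\<lambda>\<theta>. \<theta>"] mat_trace_char_poly_split(1)[OF adj_matrix_carrier cp]
      mat_trace_adj_matrix[OF sg] by simp
  show "(\<Sum>\<theta>\<in>S. real (eig_mult ?A \<theta>) * \<theta>\<^sup>2) = real n * real k"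
    using moments[of "\<lambda>\<theta>. \<theta>\<^sup>2"] mat_trace_char_poly_split(2)[OF adj_matrix_carrier cp]
      mat_trace_adj_matrix_square[OF sg reg] by simp
qed

lemma adj_matrix_rational_eigenvalue_Ints:
  assumes "eigenvalue (adj_matrix n E) \<theta>" and "\<theta> \<in> \<rat>"
  shows "\<theta> \<in> \<int>"
proof -
  define B :: "int mat" where "B = mat n n (\<lambda>(i,j). if E i j then 1 else 0)"
  have B: "B \<in> carrier_mat n n" unfolding B_def by simp
  have "adj_matrix n E = map_mat of_int B"
    unfolding B_def adj_matrix_def by (rule eq_matI) auto
  hence "char_poly (adj_matrix n E) = map_poly of_int (char_poly B)"
    using of_int_hom.char_poly_hom[OF B] by simp
  hence "poly (map_poly of_int (char_poly B)) \<theta> = 0"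
    using assms(1) eigenvalue_root_char_poly[OF adj_matrix_carrier] by simp
  moreover have "lead_coeff (char_poly B) = 1" using degree_monic_char_poly[OF B] by simp
  ultimately show ?thesis using monic_int_poly_rational_root_Ints assms(2) by blast
qed

lemma antipodal_eigenvalue_square:
  fixes k n m2 m \<theta>2 \<theta>3 :: real
  assumes count: "n = 1 + m2 + 2 * m" and trace: "k + m2 * \<theta>2 = 0"
    and trace_square: "n * k = k\<^sup>2 + m2 * \<theta>2\<^sup>2 + 2 * m * \<theta>3\<^sup>2" and "m > 0"
  shows "\<theta>3\<^sup>2 = k * (1 + (\<theta>2 + 1) * (m2 + 1) / (n - m2 - 1))"
proof -
  have "n - m2 - 1 = 2 * m" using count by simp
  moreover have "m2 * \<theta>2\<^sup>2 = (m2 * \<theta>2) * \<theta>2" by (simp add: power2_eq_square)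
  moreover have "m2 * \<theta>2 = - k" using trace by simp
  ultimately have "2 * m * \<theta>3\<^sup>2 = 2 * m * (k * (1 + (\<theta>2 + 1) * (m2 + 1) / (n - m2 - 1)))"
    using count trace trace_square \<open>m > 0\<close> by (simp add: field_simps power2_eq_square)
  thus ?thesis using \<open>m > 0\<close> by simp
qed

theorem theorem6:
  fixes n k b a m2 m3 m4 :: nat and E :: "nat \<Rightarrow> nat \<Rightarrow> bool"
    and \<theta>2 \<theta>3 \<theta>4 :: real
  assumes "strongly_deza n E k b a"
    and "{\<theta>. eigenvalue (adj_matrix n E) \<theta>} = {real k, \<theta>2, \<theta>3, \<theta>4}"
    and "distinct [real k, \<theta>2, \<theta>3, \<theta>4]"
    and "eig_mult (adj_matrix n E) (real k) = 1"
    and "eig_mult (adj_matrix n E) \<theta>2 = m2"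
    and "eig_mult (adj_matrix n E) \<theta>3 = m3"
    and "eig_mult (adj_matrix n E) \<theta>4 = m4"
    and "m2 > 0" and "m3 > 0" and "m4 > 0"
    and "\<theta>4 = - \<theta>3" and "m3 = m4"
  shows "\<theta>2 = - real k / real m2 \<and> \<theta>2 \<in> \<int> \<and> \<theta>2 \<le> -1 \<and>
    (let r = sqrt (real k * (1 + (\<theta>2 + 1) * (real m2 + 1) / (real n - real m2 - 1)))
     in (\<theta>3 = r \<and> \<theta>4 = - r) \<or> (\<theta>3 = - r \<and> \<theta>4 = r))"
proof -
  from assms(1) have sg: "simple_graph n E" and reg: "regular n E k" and "\<not> edgeless E"
    unfolding strongly_deza_def deza_graph_def by auto
  note moments = adj_matrix_spectral_moments[OF sg reg, of "{real k, \<theta>2, \<theta>3, \<theta>4}"]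
  have count: "real n = 1 + real m2 + 2 * real m3"
    and trace: "real k + real m2 * \<theta>2 = 0"
    and trace_square: "real n * real k = (real k)\<^sup>2 + real m2 * \<theta>2\<^sup>2 + 2 * real m3 * \<theta>3\<^sup>2"
    using moments assms(2-7,11,12) by (simp_all add: algebra_simps)
  have \<theta>2: "\<theta>2 = - real k / real m2" using trace \<open>m2 > 0\<close> by (simp add: field_simps)
  have "\<theta>2 \<in> \<int>"
    using adj_matrix_rational_eigenvalue_Ints[of n E \<theta>2] assms(2) \<theta>2 by auto
  moreover have "\<theta>2 < 0"
    unfolding \<theta>2 using regular_degree_pos[OF sg reg \<open>\<not> edgeless E\<close>] \<open>m2 > 0\<close>
    by (simp add: zero_less_divide_iff)
  ultimately have "\<theta>2 \<le> -1" by (auto elim: Ints_cases)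
  have "sqrt (real k * (1 + (\<theta>2 + 1) * (real m2 + 1) / (real n - real m2 - 1))) = \<bar>\<theta>3\<bar>"
    using antipodal_eigenvalue_square[OF count trace trace_square] \<open>m3 > 0\<close>
    by (simp add: real_sqrt_abs[symmetric])
  thus ?thesis
    using \<theta>2 \<open>\<theta>2 \<in> \<int>\<close> \<open>\<theta>2 \<le> -1\<close> assms(11) unfolding Let_def by (cases "\<theta>3 \<ge> 0") auto
qed

end
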